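(* There exists a constant $c>0$ such that for $p=p(n)\le c/n^2$ the following holds asymptotically almost surely: for every nonempty subset $F$ of the hyperedges of $\mathcal H=\mathcal H(\Gamma(n,p))$ there exist a vertex $v$ of $\mathcal H$ and a hyperedge $E\in F$ such that $E$ is the only hyperedge of $F$ containing $v$, and moreover $v$ is pivotal for $E$.
   Context: The random triangular group $\Gamma(n,p)$ is given by a presentation $\langle S\mid R\rangle$, where $|S|=n$ and $R$ contains independently, each with probability $p$, every cyclically reduced word $abc$ of length three over $S\cup S^{-1}$ ($a\neq b^{-1}$, $b\neq c^{-1}$, $c\neq a^{-1}$). Relations are classified: type 1 are words $aaa$ (with $a\in S\cup S^{-1}$); type 2 are words of the form $aab$, $aba$, $baa$ with $a\neq b$, in which $b$ is called pivotal; type 3 are words $abc$ with $a,b,c$ pairwise distinct letters, in which every element is pivotal. The random multi-hypergraph $\mathcal H(\Gamma(n,p))$ has vertex set $S$, and each relation $r\in R$ gives one hyperedge: if $r$ is of type 3, the 3-edge $E=\{a,b,c\}\subseteq S$ of the three generators such that $r$ is built from letters of $E\cup E^{-1}$, with all three vertices pivotal; if $r$ is of type 2, the 2-edge $E=\{a,b\}\subseteq S$ such that $r$ is built from letters of $E\cup E^{-1}$, with the generator corresponding to the pivotal letter of $r$ marked as pivotal for $E$; if $r$ is of type 1 ($r=aaa$ or $r=a^{-1}a^{-1}a^{-1}$ with $a\in S$), the 1-edge $\{a\}$. Asymptotically almost surely means with probability tending to $1$ as $n\to\infty$. *)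

theory Defs
  imports "HOL-Probability.Probability"
begin

text \<open>A letter over S = {0..<n}: a generator index together with a flag;
  (a, False) is the generator a, (a, True) is its inverse.\<close>
type_synonym letter = "nat \<times> bool"
type_synonym word3 = "letter \<times> letter \<times> letter"

definition linv :: "letter \<Rightarrow> letter" where
  "linv x = (fst x, \<not> snd x)"

definition gen :: "letter \<Rightarrow> nat" where
  "gen x = fst x"

definition words :: "nat \<Rightarrow> word3 set" where
  "words n = {(a, b, c). fst a < n \<and> fst b < n \<and> fst c < n \<and>
                b \<noteq> linv a \<and> c \<noteq> linv b \<and> a \<noteq> linv c}"

definition letters_of :: "word3 \<Rightarrow> letter list" where
  "letters_of w = (case w of (a, b, c) \<Rightarrow> [a, b, c])"

definition hedge :: "word3 \<Rightarrow> nat set" where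
  "hedge w = gen ` set (letters_of w)"

text \<open>Pivotal vertices of the hyperedge of a relation: generators of letters that
  occur exactly once in the word (type 1: none; type 2: the letter b; type 3: all).\<close>
definition pivots :: "word3 \<Rightarrow> nat set" where
  "pivots w = {gen x | x. count_list (letters_of w) x = 1}"

text \<open>The random relator set R of \<Gamma>(n,p): each cyclically reduced word of length 3
  is included independently with probability p.\<close>
definition random_relators :: "nat \<Rightarrow> real \<Rightarrow> (word3 \<Rightarrow> bool) pmf" where
  "random_relators n p = Pi_pmf (words n) False (\<lambda>_. bernoulli_pmf p)"

definition good_hypergraph :: "word3 set \<Rightarrow> bool" where
  "good_hypergraph R \<longleftrightarrow>
     (\<forall>F. F \<subseteq> R \<and> F \<noteq> {} \<longrightarrow>
        (\<exists>v. \<exists>E\<in>F. v \<in> hedge E \<and> v \<in> pivots E \<and>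
              (\<forall>E'\<in>F. v \<in> hedge E' \<longrightarrow> E' = E)))"

end

theory Submission
  imports Defs
begin

text \<open>A nonempty family \<open>F\<close> of relators without a private pivotal vertex spans few generators:
  weight each incidence of a vertex with a hyperedge by 1 if the vertex is pivotal for it and by 2
  otherwise. Every vertex of \<open>F\<close> then has weight at least 2, while every hyperedge carries
  weight at most 3, so \<open>2 |V(F)| \<le> 3 |F|\<close>. By the first moment method the probability that
  \<open>R\<close> contains such a family is at most \<open>\<Sum> p^|F|\<close>; grouping the families by their vertex
  set (of size \<open>V\<close>) and their size \<open>k\<close>, there are at most
  \<open>binomial n V \<cdot> binomial (8V^3) k\<close> of them, and for \<open>p \<le> c/n^2\<close> each group contributes
  at most \<open>(324c)^k V/n\<close>. As \<open>V < 2k\<close>, the total is \<open>O(1/n)\<close> once \<open>324c \<le> 1/8\<close>.\<close>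

lemma count_list_pos_iff_mem: "0 < count_list xs x \<longleftrightarrow> x \<in> set xs"
  using count_list_0_iff[of xs x] by auto

lemma card_set_add_card_repeated_le_length:
  "card (set xs) + card {x \<in> set xs. 2 \<le> count_list xs x} \<le> length xs"
proof -
  have "card (set xs) + card {x \<in> set xs. 2 \<le> count_list xs x}
      = (\<Sum>x\<in>set xs. 1 + of_bool (2 \<le> count_list xs x))"
    unfolding sum.distrib by (simp add: Int_def)
  also have "\<dots> \<le> (\<Sum>x\<in>set xs. count_list xs x)"
    by (rule sum_mono) (auto simp: Suc_le_eq simp flip: count_list_pos_iff_mem)
  also have "\<dots> = length xs"
    by (rule sum_count_set) simp_all
  finally show ?thesis .
qed

lemma finite_hedge: "finite (hedge w)"
  by (simp add: hedge_def)

lemma hedge_nonempty: "hedge w \<noteq> {}"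
  by (cases w) (simp add: hedge_def letters_of_def)

lemma card_hedge_add_card_nonpivotal_le: "card (hedge w) + card (hedge w - pivots w) \<le> 3"
proof -
  define xs where "xs = letters_of w"
  have "hedge w - pivots w \<subseteq> gen ` {x \<in> set xs. 2 \<le> count_list xs x}"
  proof
    fix v assume "v \<in> hedge w - pivots w"
    then obtain x where "v = gen x" "x \<in> set xs" "count_list xs x \<noteq> 1"
      by (auto simp: hedge_def pivots_def xs_def)
    moreover from this have "2 \<le> count_list xs x"
      using count_list_pos_iff_mem[of xs x] by linarith
    ultimately show "v \<in> gen ` {x \<in> set xs. 2 \<le> count_list xs x}" by blast
  qed
  then have "card (hedge w - pivots w) \<le> card (gen ` {x \<in> set xs. 2 \<le> count_list xs x})"
    by (intro card_mono) simp_all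
  also have "\<dots> \<le> card {x \<in> set xs. 2 \<le> count_list xs x}"
    by (intro card_image_le) simp
  moreover have "card (hedge w) \<le> card (set xs)"
    by (simp add: hedge_def xs_def card_image_le)
  moreover have "length xs = 3"
    by (cases w) (simp add: xs_def letters_of_def)
  ultimately show ?thesis
    using card_set_add_card_repeated_le_length[of xs] by linarith
qed

definition vertices :: "word3 set \<Rightarrow> nat set" where
  "vertices F = \<Union> (hedge ` F)"

definition has_private_pivot :: "word3 set \<Rightarrow> bool" where
  "has_private_pivot F \<longleftrightarrow>
     (\<exists>v. \<exists>E\<in>F. v \<in> hedge E \<and> v \<in> pivots E \<and> (\<forall>E'\<in>F. v \<in> hedge E' \<longrightarrow> E' = E))"

lemma good_hypergraph_iff:
  "good_hypergraph R \<longleftrightarrow> (\<forall>F \<subseteq> R. F \<noteq> {} \<longrightarrow> has_private_pivot F)"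
  by (auto simp: good_hypergraph_def has_private_pivot_def)

lemma finite_vertices: "finite F \<Longrightarrow> finite (vertices F)"
  by (simp add: vertices_def finite_hedge)

lemma vertices_nonempty: "F \<noteq> {} \<Longrightarrow> vertices F \<noteq> {}"
  by (auto simp: vertices_def hedge_nonempty)

lemma sum_pivot_weight_hedge:
  "(\<Sum>v\<in>hedge E. if v \<in> pivots E then 1 else 2) = card (hedge E) + card (hedge E - pivots E)"
proof -
  have "(\<Sum>v\<in>hedge E. if v \<in> pivots E then 1 else 2)
      = card (hedge E \<inter> pivots E) + 2 * card (hedge E - pivots E)"
    by (simp add: sum.If_cases finite_hedge Int_def set_diff_eq)
  then show ?thesis
    using card_Int_Diff[of "hedge E" "pivots E"] finite_hedge[of E] by linarith
qed

lemma two_le_pivot_weight: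
  assumes "finite F" "\<not> has_private_pivot F" "v \<in> vertices F"
  shows "2 \<le> (\<Sum>E\<in>{E \<in> F. v \<in> hedge E}. if v \<in> pivots E then 1 else 2 :: nat)"
proof -
  let ?w = "\<lambda>E. if v \<in> pivots E then 1 else 2 :: nat"
  let ?S = "{E \<in> F. v \<in> hedge E}"
  have finS: "finite ?S" using assms(1) by simp
  obtain E where E: "E \<in> ?S" using assms(3) by (auto simp: vertices_def)
  show ?thesis
  proof (cases "v \<in> pivots E")
    case True
    with assms(2) E obtain E' where E': "E' \<in> ?S" "E' \<noteq> E"
      unfolding has_private_pivot_def by blast
    have "2 \<le> sum ?w {E, E'}" using E' by simp
    also have "\<dots> \<le> sum ?w ?S" using E E' finS by (intro sum_mono2) auto
    finally show ?thesis .
  next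
    case False
    then have "2 = ?w E" by simp
    also have "\<dots> \<le> sum ?w ?S" using E finS by (intro member_le_sum) auto
    finally show ?thesis .
  qed
qed

lemma card_vertices_le_if_no_private_pivot:
  assumes fin: "finite F" and "\<not> has_private_pivot F"
  shows "2 * card (vertices F) \<le> 3 * card F"
proof -
  let ?w = "\<lambda>v E. if v \<in> pivots E then 1 else 2 :: nat"
  have "2 * card (vertices F) = (\<Sum>v\<in>vertices F. 2)" by simp
  also have "\<dots> \<le> (\<Sum>v\<in>vertices F. \<Sum>E\<in>{E \<in> F. v \<in> hedge E}. ?w v E)"
    using assms by (intro sum_mono two_le_pivot_weight)
  also have "\<dots> = (\<Sum>E\<in>F. \<Sum>v\<in>{v \<in> vertices F. v \<in> hedge E}. ?w v E)"
    using fin by (intro sum.swap_restrict finite_vertices)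
  also have "\<dots> = (\<Sum>E\<in>F. card (hedge E) + card (hedge E - pivots E))"
  proof (rule sum.cong[OF refl])
    fix E assume "E \<in> F"
    then have "{v \<in> vertices F. v \<in> hedge E} = hedge E" by (auto simp: vertices_def)
    then show "(\<Sum>v\<in>{v \<in> vertices F. v \<in> hedge E}. ?w v E) = card (hedge E) + card (hedge E - pivots E)"
      by (simp only: sum_pivot_weight_hedge)
  qed
  also have "\<dots> \<le> (\<Sum>E\<in>F. 3)"
    by (intro sum_mono card_hedge_add_card_nonpivotal_le)
  finally show ?thesis by simp
qed

lemma finite_words: "finite (words n)"
proof (rule finite_subset)
  show "words n \<subseteq> ({..<n} \<times> UNIV) \<times> ({..<n} \<times> UNIV) \<times> ({..<n} \<times> UNIV)"
    by (auto simp: words_def)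
qed auto

lemma hedge_subset_words: "w \<in> words n \<Longrightarrow> hedge w \<subseteq> {..<n}"
  by (auto simp: words_def hedge_def letters_of_def gen_def)

lemma prob_random_relators_contain:
  assumes "F \<subseteq> words n" "0 \<le> p" "p \<le> 1"
  shows "measure_pmf.prob (random_relators n p) {R. \<forall>w\<in>F. R w} = p ^ card F"
proof -
  define B where "B w = (if w \<in> F then {True} else UNIV)" for w
  have "{R. \<forall>w\<in>F. R w} = Pi (words n) B"
    using assms(1) by (auto simp: B_def Pi_def)
  then have "measure_pmf.prob (random_relators n p) {R. \<forall>w\<in>F. R w}
      = (\<Prod>w\<in>words n. measure_pmf.prob (bernoulli_pmf p) (B w))"
    unfolding random_relators_def by (simp add: measure_Pi_pmf_Pi finite_words)
  also have "\<dots> = (\<Prod>w\<in>words n. if w \<in> F then p else 1)"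
    using assms(2,3) by (intro prod.cong) (auto simp: B_def measure_pmf_single)
  also have "\<dots> = p ^ card F"
    using assms(1) finite_words[of n] by (simp add: prod.If_cases Int_absorb1)
  finally show ?thesis .
qed

definition bad_families :: "nat \<Rightarrow> word3 set set" where
  "bad_families n = {F. F \<subseteq> words n \<and> F \<noteq> {} \<and> \<not> has_private_pivot F}"

lemma finite_bad_families: "finite (bad_families n)"
  by (rule finite_subset[of _ "Pow (words n)"]) (auto simp: bad_families_def finite_words)

lemma prob_not_good_hypergraph_le:
  assumes "0 \<le> p" "p \<le> 1"
  shows "measure_pmf.prob (random_relators n p) {R. \<not> good_hypergraph {w \<in> words n. R w}}
         \<le> (\<Sum>F\<in>bad_families n. p ^ card F)"
proof -
  let ?P = "measure_pmf.prob (random_relators n p)"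
  have "{R. \<not> good_hypergraph {w \<in> words n. R w}} \<subseteq> (\<Union>F\<in>bad_families n. {R. \<forall>w\<in>F. R w})"
    by (auto simp: good_hypergraph_iff bad_families_def)
  then have "?P {R. \<not> good_hypergraph {w \<in> words n. R w}} \<le> ?P (\<Union>F\<in>bad_families n. {R. \<forall>w\<in>F. R w})"
    by (intro measure_pmf.finite_measure_mono) simp_all
  also have "\<dots> \<le> (\<Sum>F\<in>bad_families n. ?P {R. \<forall>w\<in>F. R w})"
    by (intro measure_pmf.finite_measure_subadditive_finite finite_bad_families) simp
  also have "\<dots> = (\<Sum>F\<in>bad_families n. p ^ card F)"
    using assms by (intro sum.cong) (auto simp: bad_families_def prob_random_relators_contain)
  finally show ?thesis .
qed

lemma pow_div_fact_le_exp:
  fixes x :: real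
  assumes "0 \<le> x"
  shows "x ^ n / fact n \<le> exp x"
proof -
  have "(\<Sum>i\<in>{n}. x ^ i /\<^sub>R fact i) \<le> (\<Sum>i. x ^ i /\<^sub>R fact i)"
    using assms by (intro sum_le_suminf summable_exp_generic) auto
  then show ?thesis by (simp add: exp_def divide_inverse mult.commute)
qed

lemma pow_self_div_fact_le: "real m ^ m / fact m \<le> 3 ^ m"
proof -
  have "real m ^ m / fact m \<le> exp (real m)" by (rule pow_div_fact_le_exp) simp
  also have "\<dots> = exp 1 ^ m" by (simp flip: exp_of_nat_mult)
  also have "\<dots> \<le> 3 ^ m" by (intro power_mono exp_le) simp
  finally show ?thesis .
qed

lemma binomial_le_pow_div_fact: "real (n choose k) \<le> real n ^ k / fact k"
proof -
  have "real ((n choose k) * fact k) \<le> real (n ^ k)"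
    by (rule of_nat_mono[OF binomial_fact_pow])
  then show ?thesis by (simp add: le_divide_eq)
qed

text \<open>The constant is \<open>324 = 8 \<cdot> 9 \<cdot> 9/2\<close>: \<open>V^V/V! \<le> 3^V \<le> 9^k\<close>,
  \<open>V^k/k! \<le> (3k/2)^k/k! \<le> (9/2)^k\<close>, and since \<open>V < 2k\<close> at least one surplus factor
  \<open>V/n\<close> survives from \<open>n^V V^{3k} / n^{2k}\<close>.\<close>
lemma binomial_mul_binomial_mul_pow_le:
  fixes c p :: real
  assumes V: "1 \<le> V" "V \<le> n" "2 * V \<le> 3 * k" and p: "0 \<le> p" "p \<le> c / (real n)^2"
  shows "real (n choose V) * real (8 * V^3 choose k) * p ^ k \<le> (324 * c) ^ k * (real V / real n)"
proof -
  define a where "a = real V"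
  define b where "b = real n"
  define d where "d = 2 * k - V"
  have b: "0 < b" using V by (simp add: b_def)
  have "0 \<le> c / (real n)^2" using p by linarith
  with b have c: "0 \<le> c" by (auto simp: b_def zero_le_divide_iff)
  have d: "1 \<le> d" "2 * k = V + d" using V by (auto simp: d_def)
  have A: "a ^ V / fact V \<le> 9 ^ k"
  proof -
    have "a ^ V / fact V \<le> 3 ^ V" unfolding a_def by (rule pow_self_div_fact_le)
    also have "\<dots> \<le> 3 ^ (2 * k)" using V by (intro power_increasing) auto
    finally show ?thesis by (simp add: power_mult)
  qed
  have B: "a ^ k / fact k \<le> (9/2) ^ k"
  proof -
    have "a ^ k \<le> (3/2 * real k) ^ k"
      using V by (intro power_mono) (simp_all add: a_def)
    then have "a ^ k / fact k \<le> (3/2 * real k) ^ k / fact k"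
      by (rule divide_right_mono) simp
    also have "\<dots> = (3/2) ^ k * (real k ^ k / fact k)"
      unfolding power_mult_distrib by simp
    also have "\<dots> \<le> (3/2) ^ k * 3 ^ k"
      by (intro mult_left_mono pow_self_div_fact_le) simp
    finally show ?thesis by (simp flip: power_mult_distrib)
  qed
  have C: "(a / b) ^ d \<le> a / b"
    using V d b by (intro power_le_one_iff[THEN iffD2] power_decreasing[of 1 d, simplified]) (auto simp: a_def b_def)
  have "real (n choose V) * real (8 * V^3 choose k) * p ^ k
      \<le> (b ^ V / fact V) * ((8 * a^3) ^ k / fact k) * (c / b^2) ^ k"
  proof (intro mult_mono power_mono)
    show "real (n choose V) \<le> b ^ V / fact V"
      unfolding b_def by (rule binomial_le_pow_div_fact)
    show "real (8 * V^3 choose k) \<le> (8 * a^3) ^ k / fact k"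
      using binomial_le_pow_div_fact[of "8 * V^3" k] by (simp add: a_def)
  qed (use p c b in \<open>simp_all add: a_def b_def\<close>)
  also have "\<dots> = (8 * c) ^ k * ((a ^ V / fact V) * (a ^ k / fact k) * (a / b) ^ d)"
  proof -
    have "3 * k = V + k + d" using d by simp
    then have a_pow: "(a ^ 3) ^ k = a ^ V * a ^ k * a ^ d"
      by (simp only: power_mult[symmetric] power_add[symmetric])
    have b_pow: "(b ^ 2) ^ k = b ^ V * b ^ d"
      using d by (simp flip: power_mult power_add add: mult.commute)
    have "(b ^ V / fact V) * ((8 * a^3) ^ k / fact k) * (c / b^2) ^ k
        = b ^ V * (8 ^ k * (a ^ V * a ^ k * a ^ d)) * c ^ k / (fact V * fact k * (b ^ V * b ^ d))"
      by (simp add: power_mult_distrib power_divide a_pow b_pow)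
    also have "\<dots> = (8 * c) ^ k * ((a ^ V / fact V) * (a ^ k / fact k) * (a / b) ^ d)"
      using b by (simp add: power_mult_distrib power_divide mult_ac)
    finally show ?thesis .
  qed
  also have "\<dots> \<le> (8 * c) ^ k * (9 ^ k * (9/2) ^ k * (a / b))"
  proof -
    have "(a ^ V / fact V) * (a ^ k / fact k) \<le> 9 ^ k * (9/2) ^ k"
      by (rule mult_mono[OF A B]) (simp_all add: a_def)
    then have "(a ^ V / fact V) * (a ^ k / fact k) * (a / b) ^ d \<le> 9 ^ k * (9/2) ^ k * (a / b)"
      by (rule mult_mono[OF _ C]) (use b in \<open>simp_all add: a_def\<close>)
    then show ?thesis
      by (rule mult_left_mono) (use c in simp)
  qed
  also have "\<dots> = (8 * c * 9 * (9/2)) ^ k * (a / b)"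
    unfolding power_mult_distrib by (simp only: mult_ac)
  also have "\<dots> = (324 * c) ^ k * (real V / real n)"
    by (simp add: a_def b_def)
  finally show ?thesis .
qed

definition words_within :: "nat \<Rightarrow> nat set \<Rightarrow> word3 set" where
  "words_within n U = {w \<in> words n. hedge w \<subseteq> U}"

lemma card_words_within_le:
  assumes "finite U"
  shows "card (words_within n U) \<le> 8 * card U ^ 3"
proof -
  let ?L = "U \<times> (UNIV :: bool set)"
  have "words_within n U \<subseteq> ?L \<times> ?L \<times> ?L"
    by (auto simp: words_within_def hedge_def letters_of_def gen_def image_subset_iff; blast)
  then have "card (words_within n U) \<le> card (?L \<times> ?L \<times> ?L)"
    using assms by (intro card_mono) simp_all
  also have "\<dots> = 8 * card U ^ 3"
    by (simp add: card_cartesian_product power3_eq_cube)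
  finally show ?thesis .
qed

lemma sum_Pow_card:
  fixes f :: "nat \<Rightarrow> 'a :: comm_semiring_1"
  assumes "finite A"
  shows "(\<Sum>U\<in>Pow A. f (card U)) = (\<Sum>k\<le>card A. of_nat (card A choose k) * f k)"
proof -
  have "(\<Sum>U\<in>Pow A. f (card U)) = (\<Sum>k\<le>card A. \<Sum>U\<in>{U \<in> Pow A. card U = k}. f (card U))"
    using assms by (intro sum.group[symmetric]) (auto intro: card_mono)
  also have "\<dots> = (\<Sum>k\<le>card A. of_nat (card A choose k) * f k)"
  proof (rule sum.cong[OF refl])
    fix k
    have "card {U \<in> Pow A. card U = k} = card A choose k"
      using n_subsets[OF assms, of k] by (simp add: Pow_def Collect_conj_eq)
    then show "(\<Sum>U\<in>{U \<in> Pow A. card U = k}. f (card U)) = of_nat (card A choose k) * f k"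
      by simp
  qed
  finally show ?thesis .
qed

text \<open>Bounds the total weight \<open>\<Sum> p^|F|\<close> of the bad families with a given vertex set of size
  \<open>V\<close> and \<open>k\<close> hyperedges: there are at most \<open>(2V)^3\<close> relators over \<open>V\<close> generators.\<close>
definition bad_weight_bound :: "real \<Rightarrow> nat \<Rightarrow> nat \<Rightarrow> real" where
  "bad_weight_bound p V k = (if 1 \<le> V \<and> 2 * V \<le> 3 * k then real (8 * V^3 choose k) * p ^ k else 0)"

lemma sum_bad_families_fibre_le:
  assumes "0 \<le> p"
  shows "(\<Sum>F\<in>{F \<in> bad_families n. vertices F = U \<and> card F = k}. p ^ card F)
         \<le> bad_weight_bound p (card U) k"
proof (cases "{F \<in> bad_families n. vertices F = U \<and> card F = k} = {}")
  case True
  show ?thesis unfolding True using assms by (simp add: bad_weight_bound_def)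
next
  case False
  then obtain F0 where F0: "F0 \<in> bad_families n" "vertices F0 = U" "card F0 = k" by auto
  have fin: "finite F0" using F0(1) finite_words
    by (auto simp: bad_families_def intro: finite_subset)
  have finU: "finite U" using F0(2) fin by (simp flip: F0(2) add: finite_vertices)
  have "U \<noteq> {}" using vertices_nonempty F0(1,2) by (auto simp: bad_families_def)
  then have V: "1 \<le> card U" "2 * card U \<le> 3 * k"
    using finU F0 card_vertices_le_if_no_private_pivot[OF fin]
    by (auto simp: bad_families_def Suc_le_eq card_gt_0_iff)
  have finW: "finite (words_within n U)"
    using finite_words by (rule finite_subset[rotated]) (auto simp: words_within_def)
  have "{F \<in> bad_families n. vertices F = U \<and> card F = k} \<subseteq> {F. F \<subseteq> words_within n U \<and> card F = k}"
    by (auto simp: bad_families_def words_within_def vertices_def)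
  then have "card {F \<in> bad_families n. vertices F = U \<and> card F = k}
      \<le> card {F. F \<subseteq> words_within n U \<and> card F = k}"
    using finW by (intro card_mono) (auto intro: finite_subset[of _ "Pow (words_within n U)"])
  also have "\<dots> = card (words_within n U) choose k"
    by (rule n_subsets[OF finW])
  also have "\<dots> \<le> 8 * card U ^ 3 choose k"
    by (intro binomial_right_mono card_words_within_le finU)
  finally have "real (card {F \<in> bad_families n. vertices F = U \<and> card F = k}) * p ^ k
      \<le> real (8 * card U ^ 3 choose k) * p ^ k"
    using assms by (intro mult_right_mono) simp_all
  then show ?thesis using V by (simp add: bad_weight_bound_def)
qed

lemma sum_bad_families_le_sum_Pow:
  assumes "0 \<le> p"
  shows "(\<Sum>F\<in>bad_families n. p ^ card F)
         \<le> (\<Sum>U\<in>Pow {..<n}. \<Sum>k\<le>card (words n). bad_weight_bound p (card U) k)"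
proof -
  let ?T = "Pow {..<n} \<times> {..card (words n)}"
  let ?g = "\<lambda>F. (vertices F, card F)"
  have "?g ` bad_families n \<subseteq> ?T"
    using hedge_subset_words finite_words
    by (fastforce simp: bad_families_def vertices_def intro: card_mono)
  then have "(\<Sum>F\<in>bad_families n. p ^ card F)
      = (\<Sum>y\<in>?T. \<Sum>F\<in>{F \<in> bad_families n. ?g F = y}. p ^ card F)"
    by (intro sum.group[symmetric] finite_bad_families) simp_all
  also have "\<dots> \<le> (\<Sum>y\<in>?T. bad_weight_bound p (card (fst y)) (snd y))"
    using sum_bad_families_fibre_le[OF assms] by (intro sum_mono) (auto simp: prod_eq_iff)
  also have "\<dots> = (\<Sum>U\<in>Pow {..<n}. \<Sum>k\<le>card (words n). bad_weight_bound p (card U) k)"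
    by (simp add: sum.cartesian_product split_def)
  finally show ?thesis .
qed

lemma quadratic_mul_pow_le:
  "real ((2 * k + 1) * (2 * k)) * (1/8) ^ k \<le> 6 * (1/2 :: real) ^ k"
proof -
  have "k * k \<le> 2 ^ k * 2 ^ k"
    using less_exp[of k] by (intro mult_le_mono) simp_all
  then have kk: "k * k \<le> 4 ^ k"
    by (simp flip: power_mult_distrib)
  have "(2 * k + 1) * (2 * k) = 4 * (k * k) + 2 * k" by (simp add: algebra_simps)
  then have "(2 * k + 1) * (2 * k) \<le> 6 * 4 ^ k"
    using kk le_square[of k] by linarith
  then have "real ((2 * k + 1) * (2 * k)) * (1/8) ^ k \<le> real (6 * 4 ^ k) * (1/8 :: real) ^ k"
    by (intro mult_right_mono of_nat_mono) simp_all
  also have "\<dots> = 6 * (1/2) ^ k"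
    by (simp add: mult.assoc flip: power_mult_distrib)
  finally show ?thesis .
qed

lemma sum_binomial_mul_bad_weight_bound_le:
  fixes c p :: real
  assumes n: "1 \<le> n" and p: "0 \<le> p" "p \<le> c / (real n)^2" and c: "0 \<le> c" "324 * c \<le> 1/8"
  shows "(\<Sum>V\<le>n. real (n choose V) * bad_weight_bound p V k) \<le> 6 * (1/2) ^ k / real n"
proof -
  define t where "t = (1/8) ^ k * (2 * real k / real n)"
  have "real (n choose V) * bad_weight_bound p V k \<le> (if V \<le> 2 * k then t else 0)" if "V \<le> n" for V
  proof (cases "1 \<le> V \<and> 2 * V \<le> 3 * k")
    case True
    then have "real (n choose V) * bad_weight_bound p V k \<le> (324 * c) ^ k * (real V / real n)"
      using binomial_mul_binomial_mul_pow_le[OF _ that _ p] by (simp add: bad_weight_bound_def mult.assoc)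
    also have "\<dots> \<le> t"
      unfolding t_def using True c n by (intro mult_mono power_mono divide_right_mono) simp_all
    finally show ?thesis using True by simp
  qed (auto simp: bad_weight_bound_def t_def)
  then have "(\<Sum>V\<le>n. real (n choose V) * bad_weight_bound p V k) \<le> (\<Sum>V\<le>n. if V \<le> 2 * k then t else 0)"
    by (intro sum_mono) simp
  also have "\<dots> = (\<Sum>V\<in>{..n} \<inter> {..2 * k}. t)"
    using sum.inter_restrict[of "{..n}" "\<lambda>_. t" "{..2 * k}"] by simp
  also have "\<dots> \<le> (\<Sum>V\<le>2 * k. t)"
    using n by (intro sum_mono2) (auto simp: t_def)
  also have "\<dots> = real ((2 * k + 1) * (2 * k)) * (1/8) ^ k / real n"
    by (simp add: t_def algebra_simps)
  also have "\<dots> \<le> 6 * (1/2) ^ k / real n"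
    by (intro divide_right_mono quadratic_mul_pow_le) simp
  finally show ?thesis .
qed

lemma sum_bad_families_le:
  fixes c p :: real
  assumes n: "1 \<le> n" and p: "0 \<le> p" "p \<le> c / (real n)^2" and c: "0 \<le> c" "324 * c \<le> 1/8"
  shows "(\<Sum>F\<in>bad_families n. p ^ card F) \<le> 12 / real n"
proof -
  let ?K = "card (words n)"
  have "(\<Sum>F\<in>bad_families n. p ^ card F)
      \<le> (\<Sum>U\<in>Pow {..<n}. \<Sum>k\<le>?K. bad_weight_bound p (card U) k)"
    by (rule sum_bad_families_le_sum_Pow[OF p(1)])
  also have "\<dots> = (\<Sum>k\<le>?K. \<Sum>U\<in>Pow {..<n}. bad_weight_bound p (card U) k)"
    by (rule sum.swap)
  also have "\<dots> = (\<Sum>k\<le>?K. \<Sum>V\<le>n. real (n choose V) * bad_weight_bound p V k)"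
  proof (rule sum.cong[OF refl])
    fix k
    show "(\<Sum>U\<in>Pow {..<n}. bad_weight_bound p (card U) k)
        = (\<Sum>V\<le>n. real (n choose V) * bad_weight_bound p V k)"
      using sum_Pow_card[of "{..<n}" "\<lambda>V. bad_weight_bound p V k"] by simp
  qed
  also have "\<dots> \<le> (\<Sum>k\<le>?K. 6 * (1/2) ^ k / real n)"
    using sum_binomial_mul_bad_weight_bound_le[OF n p c] by (intro sum_mono)
  also have "\<dots> = 6 * (\<Sum>k\<le>?K. (1/2) ^ k) / real n"
    by (simp add: sum_divide_distrib sum_distrib_left)
  also have "\<dots> \<le> 6 * 2 / real n"
  proof -
    have "(\<Sum>k\<le>?K. (1/2 :: real) ^ k) \<le> (\<Sum>k. (1/2) ^ k)"
      by (intro sum_le_suminf summable_geometric) simp_all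
    also have "\<dots> = 2" by (simp add: suminf_geometric)
    finally show ?thesis by (intro divide_right_mono mult_left_mono) simp_all
  qed
  finally show ?thesis by simp
qed

lemma prob_good_hypergraph_ge:
  fixes c p :: real
  assumes n: "1 \<le> n" and p: "0 \<le> p" "p \<le> c / (real n)^2" and c: "0 \<le> c" "324 * c \<le> 1/8"
  shows "1 - 12 / real n \<le> measure_pmf.prob (random_relators n p) {R. good_hypergraph {w \<in> words n. R w}}"
proof -
  let ?P = "measure_pmf.prob (random_relators n p)"
  have "c / (real n)^2 \<le> 1"
    using n c by (simp add: divide_le_eq order_trans[OF _ one_le_power])
  then have "?P {R. \<not> good_hypergraph {w \<in> words n. R w}} \<le> 12 / real n"
    using prob_not_good_hypergraph_le[of p n] sum_bad_families_le[OF n p c] p by linarith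
  moreover have "?P {R. \<not> good_hypergraph {w \<in> words n. R w}} = 1 - ?P {R. good_hypergraph {w \<in> words n. R w}}"
    using measure_pmf.prob_neg[of "random_relators n p" "\<lambda>R. good_hypergraph {w \<in> words n. R w}"] by simp
  ultimately show ?thesis by linarith
qed

theorem lemma2p2:
  shows "\<exists>c>0. \<forall>p :: nat \<Rightarrow> real.
           (\<forall>n. 0 \<le> p n \<and> p n \<le> c / (real n)^2) \<longrightarrow>
           (\<lambda>n. measure_pmf.prob (random_relators n (p n))
                   {R. good_hypergraph {w \<in> words n. R w}}) \<longlonglongrightarrow> 1"
proof (intro exI[of _ "1/3000"] conjI allI impI)
  fix p :: "nat \<Rightarrow> real"
  assume p: "\<forall>n. 0 \<le> p n \<and> p n \<le> (1/3000) / (real n)^2"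
  show "(\<lambda>n. measure_pmf.prob (random_relators n (p n)) {R. good_hypergraph {w \<in> words n. R w}}) \<longlonglongrightarrow> 1"
  proof (rule tendsto_sandwich[where h = "\<lambda>_. 1"])
    show "\<forall>\<^sub>F n in sequentially. 1 - 12 / real n
        \<le> measure_pmf.prob (random_relators n (p n)) {R. good_hypergraph {w \<in> words n. R w}}"
      using eventually_ge_at_top[of 1]
      by eventually_elim (rule prob_good_hypergraph_ge[where c = "1/3000"], use p in auto)
    show "(\<lambda>n. 1 - 12 / real n) \<longlonglongrightarrow> 1"
      using tendsto_diff[OF tendsto_const lim_const_over_n[of 12]] by simp
  qed simp_all
qed simp

end
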